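(* Let $\Gamma\in\mathbb{R}^{n\times m}$ and let $R:\mathbb{R}^n_{\ge0}\to\mathbb{R}^m$ be locally Lipschitz such that $\dot S=\Gamma R(S)$ leaves $\mathbb{R}^n_{\ge0}$ invariant and is forward complete. For $\sigma\in\mathbb{R}^n_{\ge0}$ consider $\dot x=f_\sigma(x):=R(\sigma+\Gamma x)$ on $X_\sigma=\{x\in\mathbb{R}^m:\sigma+\Gamma x\ge0\}$. Suppose that: (1) $\Gamma$ has rank $m-1$, with kernel spanned by a unit vector all of whose entries are positive; (2) every solution of $\dot S=\Gamma R(S)$ in $\mathbb{R}^n_{\ge0}$ is bounded; (3) $\sigma\in\mathbb{R}^n_{\ge0}$ is such that $\dot x=f_\sigma(x)$ on $X_\sigma$ is strongly monotone with respect to the order induced by the cone $\mathbb{R}^m_{\ge0}$ (i.e. if $\xi_1\ge\xi_2$, $\xi_1\ne\xi_2$, then every component of $\varphi_t(\xi_1)-\varphi_t(\xi_2)$ is strictly positive for all $t>0$). Then there is $\zeta=\zeta_\sigma\in\mathbb{R}^n_{\ge0}$ such that for each $\rho\in\mathbb{R}^n_{\ge0}$ with $\rho-\sigma\in\operatorname{Image}(\Gamma)$, the solution $S$ of $\dot S=\Gamma R(S)$ with $S(0)=\rho$ satisfies $S(t)\to\zeta$ as $t\to\infty$.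
   Context: Inequalities between vectors are componentwise; $\varphi_t$ denotes the flow of $\dot x=f_\sigma(x)$ on $X_\sigma$. *)

theory Defs
  imports "HOL-Analysis.Analysis"
begin

definition nonneg_orthant :: "(real^'n) set" where
  "nonneg_orthant = {x. \<forall>i. 0 \<le> x $ i}"

definition loc_lipschitz_on :: "('a::metric_space) set \<Rightarrow> ('a \<Rightarrow> 'b::metric_space) \<Rightarrow> bool" where
  "loc_lipschitz_on D R \<longleftrightarrow> (\<forall>x\<in>D. \<exists>e>0. \<exists>L. L-lipschitz_on (cball x e \<inter> D) R)"

definition fwd_solution :: "('a::real_normed_vector \<Rightarrow> 'a) \<Rightarrow> 'a set \<Rightarrow> 'a \<Rightarrow> (real \<Rightarrow> 'a) \<Rightarrow> bool" where
  "fwd_solution F D x0 x \<longleftrightarrow> x 0 = x0 \<and>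
     (\<forall>t\<ge>0. x t \<in> D \<and> (x has_vector_derivative F (x t)) (at t within {0..}))"

end

theory Submission
  imports Defs
begin

text \<open>Since \<open>\<Gamma> v = 0\<close>, the extent system \<open>x' = R (\<sigma> + \<Gamma> x)\<close>, whose solutions give
  \<open>S = \<sigma> + \<Gamma> x\<close>, is invariant under shifts along \<open>v\<close>. Comparing one solution with
  \<open>v\<close>-shifts of another, strong monotonicity shows that the oscillation
  \<open>osc a = max\<^sub>i a\<^sub>i / v\<^sub>i - min\<^sub>i a\<^sub>i / v\<^sub>i\<close> of the difference of two solutions is
  nonincreasing, and strictly decreasing unless the difference lies in \<open>span {v} = ker \<Gamma>\<close>.
  As \<open>osc a\<close> is comparable to \<open>norm (\<Gamma> a)\<close>, boundedness of \<open>S\<close> yields an \<open>\<omega>\<close>-limit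
  point \<open>q\<close> modulo \<open>v\<close>; LaSalle's argument with \<open>osc\<close> as Lyapunov function shows that
  the solution from \<open>q\<close> only moves along \<open>v\<close>, so \<open>\<sigma> + \<Gamma> q\<close> is an equilibrium and
  \<open>S \<longlongrightarrow> \<sigma> + \<Gamma> q\<close>. Strict contraction makes \<open>q\<close> unique modulo \<open>v\<close>, hence
  the limit does not depend on \<open>\<rho>\<close>.\<close>

lemma loc_lipschitz_on_imp_continuous_on:
  assumes "loc_lipschitz_on D R"
  shows "continuous_on D R"
  unfolding continuous_on_eq_continuous_within
proof
  fix x assume x: "x \<in> D"
  obtain e L where e: "e > 0" "L-lipschitz_on (cball x e \<inter> D) R"
    using assms x unfolding loc_lipschitz_on_def by blast
  have "continuous (at x within (cball x e \<inter> D)) R"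
    using lipschitz_on_continuous_on[OF e(2)] x e(1)
    unfolding continuous_on_eq_continuous_within by auto
  moreover have "at x within D = at x within (cball x e \<inter> D)"
    by (rule at_within_nhd[of _ "ball x e"]) (use e(1) in auto)
  ultimately show "continuous (at x within D) R" by simp
qed

lemma closed_nonneg_orthant: "closed (nonneg_orthant :: (real^'n) set)"
  unfolding nonneg_orthant_def by (intro closed_Collect_all closed_Collect_le continuous_intros)

lemma fwd_solution_time_shift:
  assumes x: "fwd_solution F D \<xi> x" and s: "0 \<le> s"
  shows "fwd_solution F D (x s) (\<lambda>t. x (s + t))"
  unfolding fwd_solution_def
proof safe
  fix t :: real assume t: "0 \<le> t"
  show "x (s + t) \<in> D" using x s t unfolding fwd_solution_def by auto
  have shift: "((\<lambda>t. s + t) has_vector_derivative 1) (at t within {0..})"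
    by (auto intro!: derivative_eq_intros)
  have "(x has_vector_derivative F (x (s + t))) (at (s + t) within {0..})"
    using x s t unfolding fwd_solution_def by auto
  then have "(x has_vector_derivative F (x (s + t))) (at (s + t) within (\<lambda>t. s + t) ` {0..})"
    by (rule has_vector_derivative_within_subset) (use s in auto)
  from vector_diff_chain_within[OF shift this]
  show "((\<lambda>t. x (s + t)) has_vector_derivative F (x (s + t))) (at t within {0..})"
    by (simp add: o_def)
qed simp

text \<open>A solution of \<open>S' = \<Gamma> R(S)\<close> starting in \<open>\<sigma> + Image \<Gamma>\<close> is \<open>S = \<sigma> + \<Gamma> x\<close> for the
  extent \<open>x t = \<xi> + \<integral>\<^sub>0\<^sup>t R(S)\<close>, which solves \<open>x' = R(\<sigma> + \<Gamma> x)\<close>.\<close>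
lemma fwd_solution_lift:
  fixes \<Gamma> :: "real^'m^'n"
  assumes R: "continuous_on D R"
    and S: "fwd_solution (\<lambda>S. \<Gamma> *v R S) D (\<sigma> + \<Gamma> *v \<xi>) S"
  shows "\<exists>x. fwd_solution (\<lambda>x. R (\<sigma> + \<Gamma> *v x)) {x. \<sigma> + \<Gamma> *v x \<in> D} \<xi> x
           \<and> (\<forall>t\<ge>0. S t = \<sigma> + \<Gamma> *v x t)"
proof -
  have S': "\<And>t. 0 \<le> t \<Longrightarrow> (S has_vector_derivative \<Gamma> *v R (S t)) (at t within {0..})"
    and S_mem: "\<And>t. 0 \<le> t \<Longrightarrow> S t \<in> D" and S0: "S 0 = \<sigma> + \<Gamma> *v \<xi>"
    using S unfolding fwd_solution_def by auto
  have "continuous_on {0..} S"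
    unfolding continuous_on_eq_continuous_within
    using S' has_vector_derivative_continuous by fastforce
  then have RS: "continuous_on {0..} (\<lambda>s. R (S s))"
    by (rule continuous_on_compose2[OF R]) (use S_mem in auto)
  define x where "x t = \<xi> + integral {0..t} (\<lambda>s. R (S s))" for t
  have x: "S t = \<sigma> + \<Gamma> *v x t \<and> (x has_vector_derivative R (S t)) (at t within {0..})"
    if t: "0 \<le> t" for t
  proof
    have "continuous_on {0..t} (\<lambda>s. R (S s))" by (rule continuous_on_subset[OF RS]) auto
    then have "((\<lambda>s. R (S s)) has_integral integral {0..t} (\<lambda>s. R (S s))) {0..t}"
      by (intro integrable_integral integrable_continuous_real)
    from has_integral_linear[OF this matrix_vector_mul_bounded_linear[of \<Gamma>]]
    have "((\<lambda>s. \<Gamma> *v R (S s)) has_integral \<Gamma> *v integral {0..t} (\<lambda>s. R (S s))) {0..t}"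
      by (simp add: o_def)
    moreover have "((\<lambda>s. \<Gamma> *v R (S s)) has_integral S t - S 0) {0..t}"
      by (rule fundamental_theorem_of_calculus[OF t])
        (auto intro: has_vector_derivative_within_subset[OF S'])
    ultimately have "\<Gamma> *v integral {0..t} (\<lambda>s. R (S s)) = S t - S 0"
      by (rule has_integral_unique)
    then show "S t = \<sigma> + \<Gamma> *v x t"
      unfolding x_def using S0 by (simp add: matrix_vector_right_distrib)
    have "((\<lambda>u. integral {0..u} (\<lambda>s. R (S s))) has_vector_derivative R (S t)) (at t within {0..t+1})"
      by (rule integral_has_vector_derivative) (use t continuous_on_subset[OF RS] in auto)
    moreover have "at t within {0..t+1} = at t within {0..}"
      by (rule at_within_nhd[of _ "{..<t+1}"]) auto
    ultimately show "(x has_vector_derivative R (S t)) (at t within {0..})"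
      unfolding x_def[abs_def] by (auto intro!: derivative_eq_intros)
  qed
  have "fwd_solution (\<lambda>x. R (\<sigma> + \<Gamma> *v x)) {x. \<sigma> + \<Gamma> *v x \<in> D} \<xi> x"
    unfolding fwd_solution_def
  proof (intro conjI allI impI)
    fix t :: real assume t: "0 \<le> t"
    show "x t \<in> {x. \<sigma> + \<Gamma> *v x \<in> D}" using x[OF t] S_mem[OF t] by simp
    show "(x has_vector_derivative R (\<sigma> + \<Gamma> *v x t)) (at t within {0..})" using x[OF t] by metis
  qed (simp add: x_def)
  with x show ?thesis by metis
qed

locale positive_vector =
  fixes v :: "real^'m"
  assumes pos: "0 < v $ i"
begin

lemma nonzero: "v \<noteq> 0"
  using pos[of undefined] by (metis less_irrefl zero_index)

definition max_ratio :: "real^'m \<Rightarrow> real" where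
  "max_ratio a = (MAX i. a $ i / v $ i)"

definition min_ratio :: "real^'m \<Rightarrow> real" where
  "min_ratio a = (MIN i. a $ i / v $ i)"

definition osc :: "real^'m \<Rightarrow> real" where
  "osc a = max_ratio a - min_ratio a"

lemma max_ratio_le_iff: "max_ratio a \<le> c \<longleftrightarrow> (\<forall>i. a $ i / v $ i \<le> c)"
  unfolding max_ratio_def by (subst Max_le_iff) auto

lemma max_ratio_less_iff: "max_ratio a < c \<longleftrightarrow> (\<forall>i. a $ i / v $ i < c)"
  unfolding max_ratio_def by (subst Max_less_iff) auto

lemma le_min_ratio_iff: "c \<le> min_ratio a \<longleftrightarrow> (\<forall>i. c \<le> a $ i / v $ i)"
  unfolding min_ratio_def by (subst Min_ge_iff) auto

lemma ratio_le_max_ratio: "a $ i / v $ i \<le> max_ratio a"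
  using max_ratio_le_iff by blast

lemma min_ratio_le_ratio: "min_ratio a \<le> a $ i / v $ i"
  using le_min_ratio_iff by blast

lemma le_max_ratio: "a $ i \<le> max_ratio a * v $ i"
  using ratio_le_max_ratio[of a i] pos[of i] by (simp add: divide_le_eq)

lemma min_ratio_le: "min_ratio a * v $ i \<le> a $ i"
  using min_ratio_le_ratio[of a i] pos[of i] by (simp add: le_divide_eq)

lemma max_ratio_uminus: "max_ratio (- a) = - min_ratio a"
proof (rule antisym)
  show "max_ratio (- a) \<le> - min_ratio a"
    using min_ratio_le_ratio[of a] by (simp add: max_ratio_le_iff)
  have "- max_ratio (- a) \<le> min_ratio a"
    using ratio_le_max_ratio[of "- a"] by (simp add: le_min_ratio_iff minus_le_iff)
  then show "- min_ratio a \<le> max_ratio (- a)" by linarith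
qed

lemma max_ratio_add_scaleR: "max_ratio (a + c *\<^sub>R v) = max_ratio a + c"
proof -
  have ratio: "(a + c *\<^sub>R v) $ i / v $ i = a $ i / v $ i + c" for i
    using pos[of i] by (simp add: add_divide_distrib)
  show ?thesis
  proof (rule antisym)
    show "max_ratio (a + c *\<^sub>R v) \<le> max_ratio a + c"
      unfolding max_ratio_le_iff ratio using ratio_le_max_ratio[of a] by simp
    have "max_ratio a \<le> max_ratio (a + c *\<^sub>R v) - c"
      unfolding max_ratio_le_iff using ratio_le_max_ratio[of "a + c *\<^sub>R v"]
      by (simp only: ratio) (simp add: le_diff_eq)
    then show "max_ratio a + c \<le> max_ratio (a + c *\<^sub>R v)" by linarith
  qed
qed

lemma min_ratio_add_scaleR: "min_ratio (a + c *\<^sub>R v) = min_ratio a + c"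
proof -
  have "- (a + c *\<^sub>R v) = - a + (- c) *\<^sub>R v" by simp
  then have "min_ratio (a + c *\<^sub>R v) = - max_ratio (- a + (- c) *\<^sub>R v)"
    using max_ratio_uminus[of "a + c *\<^sub>R v"] by simp
  also have "\<dots> = min_ratio a + c"
    by (simp only: max_ratio_add_scaleR max_ratio_uminus)
  finally show ?thesis .
qed

lemma osc_nonneg: "0 \<le> osc a"
  using ratio_le_max_ratio[of a undefined] min_ratio_le_ratio[of a undefined]
  unfolding osc_def by linarith

lemma osc_add: "osc (a + b) \<le> osc a + osc b"
proof -
  have "max_ratio (a + b) \<le> max_ratio a + max_ratio b"
    using ratio_le_max_ratio[of a] ratio_le_max_ratio[of b]
    by (simp add: max_ratio_le_iff add_divide_distrib add_mono)
  moreover have "min_ratio a + min_ratio b \<le> min_ratio (a + b)"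
    using min_ratio_le_ratio[of a] min_ratio_le_ratio[of b]
    by (simp add: le_min_ratio_iff add_divide_distrib add_mono)
  ultimately show ?thesis unfolding osc_def by linarith
qed

lemma osc_minus_commute: "osc (a - b) = osc (b - a)"
  using max_ratio_uminus[of "a - b"] max_ratio_uminus[of "b - a"] unfolding osc_def by simp

lemma osc_diff_diff_le: "\<bar>osc (a - b) - osc (c - d)\<bar> \<le> osc (a - c) + osc (b - d)"
proof -
  have "osc (a - b) \<le> osc (a - c) + osc (c - d) + osc (d - b)"
    using osc_add[of "a - c" "c - d"] osc_add[of "a - c + (c - d)" "d - b"] by simp
  moreover have "osc (c - d) \<le> osc (c - a) + osc (a - b) + osc (b - d)"
    using osc_add[of "c - a" "a - b"] osc_add[of "c - a + (a - b)" "b - d"] by simp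
  ultimately show ?thesis using osc_minus_commute[of b d] osc_minus_commute[of c a] by linarith
qed

lemma osc_add_scaleR: "osc (a + c *\<^sub>R v) = osc a"
  unfolding osc_def max_ratio_add_scaleR min_ratio_add_scaleR by simp

lemma osc_add_span: "b \<in> span {v} \<Longrightarrow> osc (a + b) = osc a"
  by (auto simp: span_singleton osc_add_scaleR)

lemma norm_matrix_le_osc:
  fixes G :: "real^'m^'n"
  assumes Gv: "G *v v = 0"
  shows "\<exists>K>0. \<forall>a. norm (G *v a) \<le> K * osc a"
proof -
  obtain K where K: "K > 0" "\<And>x. norm (G *v x) \<le> norm x * K"
    using bounded_linear.pos_bounded[OF matrix_vector_mul_bounded_linear[of G]] by blast
  have "norm (G *v a) \<le> (K * norm v) * osc a" for a
  proof -
    define b where "b = a - min_ratio a *\<^sub>R v"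
    have "\<bar>b $ i\<bar> \<le> \<bar>(osc a *\<^sub>R v) $ i\<bar>" for i
      using min_ratio_le[of a i] le_max_ratio[of a i] osc_nonneg[of a] pos[of i]
      unfolding b_def osc_def by (simp add: left_diff_distrib)
    then have "norm b \<le> osc a * norm v"
      using norm_le_componentwise_cart[of b "osc a *\<^sub>R v"] osc_nonneg[of a] by simp
    moreover have "G *v b = G *v a"
      unfolding b_def by (simp add: matrix_vector_mult_diff_distrib matrix_vector_mult_scaleR Gv)
    ultimately show ?thesis
      using K(2)[of b] mult_left_mono[of "norm b" "norm v * osc a" K] K(1)
      by (simp add: mult.commute mult.left_commute order_trans)
  qed
  moreover have "0 < K * norm v"
    using K(1) nonzero by simp
  ultimately show ?thesis by blast
qed

lemma osc_le_norm_matrix: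
  fixes G :: "real^'m^'n"
  assumes kernel: "{x. G *v x = 0} = span {v}"
  shows "\<exists>K>0. \<forall>a. osc a \<le> K * norm (G *v a)"
proof -
  have vv: "v \<bullet> v \<noteq> 0" using nonzero by simp
  have "x = 0" if orth: "v \<bullet> x = 0" and Gx: "G *v x = 0" for x
  proof -
    obtain k where "x = k *\<^sub>R v" using Gx kernel by (auto simp: span_singleton)
    then show ?thesis using orth vv by simp
  qed
  then obtain e where e: "e > 0" "\<And>x. v \<bullet> x = 0 \<Longrightarrow> e * norm x \<le> norm (G *v x)"
    using injective_imp_isometric[OF closed_hyperplane[of v 0] subspace_hyperplane
        matrix_vector_mul_bounded_linear] by blast
  define m where "m = (MIN i. v $ i)"
  have m: "0 < m" "m \<le> v $ i" for i
    unfolding m_def using pos by (subst Min_gr_iff) auto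
  have "osc a \<le> (2 / (m * e)) * norm (G *v a)" for a
  proof -
    define b where "b = a + (- (v \<bullet> a / (v \<bullet> v))) *\<^sub>R v"
    have vb: "v \<bullet> b = 0" using vv unfolding b_def by (simp add: inner_diff_right)
    have Gv: "G *v v = 0" using kernel span_base[of v "{v}"] by auto
    have Gb: "G *v b = G *v a"
      unfolding b_def by (simp add: matrix_vector_mult_diff_distrib matrix_vector_mult_scaleR Gv)
    have bound: "\<bar>b $ i / v $ i\<bar> \<le> norm b / m" for i
    proof -
      have "\<bar>b $ i / v $ i\<bar> \<le> norm b / v $ i"
        using pos[of i] component_le_norm_cart[of b i] by (simp add: divide_right_mono)
      also have "\<dots> \<le> norm b / m" using m(2)[of i] m(1) by (simp add: frac_le)
      finally show ?thesis .
    qed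
    have "max_ratio b \<le> norm b / m" "- (norm b / m) \<le> min_ratio b"
      unfolding max_ratio_le_iff le_min_ratio_iff using bound
      by (simp_all only: abs_le_iff) (meson minus_le_iff)+
    then have "osc b \<le> 2 * norm b / m" unfolding osc_def by simp
    also have "\<dots> \<le> 2 * (norm (G *v b) / e) / m"
      using e(2)[OF vb] e(1) m(1) by (intro divide_right_mono mult_left_mono) (auto simp: field_simps)
    finally show ?thesis using Gb unfolding b_def osc_add_scaleR by (simp add: mult.commute)
  qed
  moreover have "2 / (m * e) > 0" using m(1) e(1) by simp
  ultimately show ?thesis by blast
qed

end

locale shift_invariant_monotone_system = positive_vector v for v :: "real^'m" +
  fixes F :: "real^'m \<Rightarrow> real^'m" and X :: "(real^'m) set"
  assumes shift_mem: "x \<in> X \<Longrightarrow> x + c *\<^sub>R v \<in> X"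
    and shift_eq: "x \<in> X \<Longrightarrow> F (x + c *\<^sub>R v) = F x"
    and strongly_monotone: "\<lbrakk>fwd_solution F X \<xi>1 x1; fwd_solution F X \<xi>2 x2;
      \<forall>i. \<xi>2 $ i \<le> \<xi>1 $ i; \<xi>1 \<noteq> \<xi>2; 0 < t\<rbrakk> \<Longrightarrow> x2 t $ i < x1 t $ i"
begin

abbreviation solution :: "real^'m \<Rightarrow> (real \<Rightarrow> real^'m) \<Rightarrow> bool" where
  "solution \<equiv> fwd_solution F X"

lemma solution_shift: "solution \<xi> x \<Longrightarrow> solution (\<xi> + c *\<^sub>R v) (\<lambda>t. x t + c *\<^sub>R v)"
  unfolding fwd_solution_def by (auto simp: shift_mem shift_eq intro!: derivative_eq_intros)

text \<open>Uniqueness needs no Lipschitz condition: if \<open>y t $ i > x t $ i\<close>, shifting \<open>x\<close> along \<open>v\<close>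
  until its \<open>i\<close>-th component meets \<open>y t $ i\<close> contradicts strong monotonicity.\<close>
lemma solution_unique:
  assumes x: "solution \<xi> x" and y: "solution \<xi> y" and t: "0 \<le> t"
  shows "x t = y t"
proof (cases "t = 0")
  case True
  then show ?thesis using x y unfolding fwd_solution_def by simp
next
  case False
  with t have t: "0 < t" by simp
  have le: "y t $ i \<le> x t $ i" if x: "solution \<xi> x" and y: "solution \<xi> y" for x y i
  proof (rule ccontr)
    assume "\<not> y t $ i \<le> x t $ i"
    define c where "c = (y t $ i - x t $ i) / v $ i"
    have c: "0 < c" using \<open>\<not> y t $ i \<le> x t $ i\<close> pos[of i] unfolding c_def by simp
    have "\<forall>j. \<xi> $ j \<le> (\<xi> + c *\<^sub>R v) $ j" using c pos by (simp add: less_imp_le)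
    moreover have "\<xi> + c *\<^sub>R v \<noteq> \<xi>" using c nonzero by simp
    ultimately have "y t $ i < (x t + c *\<^sub>R v) $ i"
      by (rule strongly_monotone[OF solution_shift[OF x] y _ _ t])
    then show False using pos[of i] unfolding c_def by simp
  qed
  show ?thesis using le[OF x y] le[OF y x] by (simp add: vec_eq_iff antisym)
qed

lemma solution_mono:
  assumes "solution \<xi>1 x1" "solution \<xi>2 x2" "\<forall>i. \<xi>2 $ i \<le> \<xi>1 $ i" "0 \<le> t"
  shows "x2 t $ i \<le> x1 t $ i"
proof (cases "\<xi>1 = \<xi>2 \<or> t = 0")
  case True
  then show ?thesis
    using assms solution_unique[OF assms(1), of x2 t] unfolding fwd_solution_def by auto
next
  case False
  then show ?thesis using strongly_monotone[OF assms(1-3)] assms(4) by (simp add: less_imp_le)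
qed

lemma max_ratio_solution_le:
  assumes x: "solution \<xi> x" and y: "solution \<eta> y" and t: "0 \<le> t"
  shows "max_ratio (x t - y t) \<le> max_ratio (\<xi> - \<eta>)"
proof -
  let ?c = "max_ratio (\<xi> - \<eta>)"
  have "\<forall>i. \<xi> $ i \<le> (\<eta> + ?c *\<^sub>R v) $ i"
    using le_max_ratio[of "\<xi> - \<eta>"] by (simp add: algebra_simps)
  then have "x t $ i \<le> (y t + ?c *\<^sub>R v) $ i" for i
    by (rule solution_mono[OF solution_shift[OF y] x _ t])
  then have "(x t - y t) $ i \<le> ?c * v $ i" for i
    by (simp add: diff_le_eq add.commute)
  then show ?thesis
    unfolding max_ratio_le_iff using pos by (simp add: divide_le_eq)
qed

lemma max_ratio_solution_less:
  assumes x: "solution \<xi> x" and y: "solution \<eta> y" and t: "0 < t" and "\<xi> - \<eta> \<notin> span {v}"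
  shows "max_ratio (x t - y t) < max_ratio (\<xi> - \<eta>)"
proof -
  let ?c = "max_ratio (\<xi> - \<eta>)"
  have "\<eta> + ?c *\<^sub>R v \<noteq> \<xi>"
    using \<open>\<xi> - \<eta> \<notin> span {v}\<close> by (metis add_diff_cancel_left' span_base span_mul singletonI)
  moreover have "\<forall>i. \<xi> $ i \<le> (\<eta> + ?c *\<^sub>R v) $ i"
    using le_max_ratio[of "\<xi> - \<eta>"] by (simp add: algebra_simps)
  ultimately have "x t $ i < (y t + ?c *\<^sub>R v) $ i" for i
    using strongly_monotone[OF solution_shift[OF y] x _ _ t] by blast
  then have "(x t - y t) $ i < ?c * v $ i" for i
    by (simp add: diff_less_eq add.commute)
  then show ?thesis
    unfolding max_ratio_less_iff using pos by (simp add: divide_less_eq)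
qed

lemma min_ratio_solution_ge:
  assumes x: "solution \<xi> x" and y: "solution \<eta> y" and t: "0 \<le> t"
  shows "min_ratio (\<xi> - \<eta>) \<le> min_ratio (x t - y t)"
  using max_ratio_solution_le[OF y x t] max_ratio_uminus[of "\<xi> - \<eta>"] max_ratio_uminus[of "x t - y t"]
  by simp

lemma osc_solution_le:
  assumes "solution \<xi> x" "solution \<eta> y" "0 \<le> t"
  shows "osc (x t - y t) \<le> osc (\<xi> - \<eta>)"
  using max_ratio_solution_le[OF assms] min_ratio_solution_ge[OF assms] unfolding osc_def by simp

lemma osc_solution_less:
  assumes "solution \<xi> x" "solution \<eta> y" "0 < t" "\<xi> - \<eta> \<notin> span {v}"
  shows "osc (x t - y t) < osc (\<xi> - \<eta>)"
  using max_ratio_solution_less[OF assms] min_ratio_solution_ge[OF assms(1,2) less_imp_le[OF assms(3)]]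
  unfolding osc_def by simp

lemma osc_solution_antimono:
  assumes x: "solution \<xi> x" and y: "solution \<eta> y" and "0 \<le> s" "s \<le> t"
  shows "osc (x t - y t) \<le> osc (x s - y s)"
  using osc_solution_le[OF fwd_solution_time_shift[OF x assms(3)] fwd_solution_time_shift[OF y assms(3)],
      of "t - s"]
    assms(3,4) by simp

definition relative_equilibrium :: "real^'m \<Rightarrow> bool" where
  "relative_equilibrium q \<longleftrightarrow> (\<exists>y. solution q y \<and> (\<forall>t\<ge>0. y t - q \<in> span {v}))"

lemma relative_equilibrium_unique:
  assumes "relative_equilibrium p" "relative_equilibrium q"
  shows "p - q \<in> span {v}"
proof (rule ccontr)
  assume pq: "p - q \<notin> span {v}"
  obtain yp yq where yp: "solution p yp" "\<forall>t\<ge>0. yp t - p \<in> span {v}"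
    and yq: "solution q yq" "\<forall>t\<ge>0. yq t - q \<in> span {v}"
    using assms unfolding relative_equilibrium_def by blast
  have "(yp 1 - p) - (yq 1 - q) \<in> span {v}" using yp(2) yq(2) by (simp add: span_diff)
  then have "osc ((p - q) + ((yp 1 - p) - (yq 1 - q))) = osc (p - q)" by (rule osc_add_span)
  moreover have "(p - q) + ((yp 1 - p) - (yq 1 - q)) = yp 1 - yq 1" by simp
  ultimately have "osc (yp 1 - yq 1) = osc (p - q)" by simp
  with osc_solution_less[OF yp(1) yq(1) _ pq, of 1] show False by simp
qed

text \<open>LaSalle's argument: \<open>W s = osc (x (s + \<tau>) - x s)\<close> is nonincreasing and
  \<open>W (tk k + s)\<close> approaches \<open>osc (y (\<tau> + s) - y s)\<close>. Hence the latter takes the same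
  value at \<open>s = 0\<close> and \<open>s = 1\<close>, which strict contraction only allows if it vanishes.\<close>
lemma relative_equilibrium_of_limit:
  assumes x: "solution \<xi> x" and y: "solution q y"
    and tk_nonneg: "\<And>k. 0 \<le> tk k" and tk_gap: "\<And>k. tk k + 1 \<le> tk (Suc k)"
    and lim: "(\<lambda>k. osc (x (tk k) - q)) \<longlonglongrightarrow> 0"
  shows "relative_equilibrium q"
proof -
  define e where "e k = osc (x (tk k) - q)" for k
  have "y \<tau> - q \<in> span {v}" if \<tau>: "0 \<le> \<tau>" for \<tau>
  proof (rule ccontr)
    assume not_span: "y \<tau> - q \<notin> span {v}"
    define W where "W s = osc (x (s + \<tau>) - x s)" for s
    have W_antimono: "W t \<le> W s" if "0 \<le> s" "s \<le> t" for s t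
      using osc_solution_antimono[OF fwd_solution_time_shift[OF x \<tau>] x that]
      unfolding W_def by (simp add: add.commute)
    have W_close: "\<bar>W (tk k + s) - osc (y (\<tau> + s) - y s)\<bar> \<le> 2 * e k" if s: "0 \<le> s" for k s
    proof -
      have close: "osc (x (tk k + r) - y r) \<le> e k" if "0 \<le> r" for r
        using osc_solution_le[OF fwd_solution_time_shift[OF x tk_nonneg] y that] unfolding e_def .
      have "tk k + s + \<tau> = tk k + (\<tau> + s)" by simp
      then have "W (tk k + s) = osc (x (tk k + (\<tau> + s)) - x (tk k + s))"
        unfolding W_def by (simp only:)
      then show ?thesis
        using osc_diff_diff_le[of "x (tk k + (\<tau> + s))" "x (tk k + s)" "y (\<tau> + s)" "y s"]
          close[of "\<tau> + s"] close[of s] \<tau> s by simp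
    qed
    have y0: "y 0 = q" using y unfolding fwd_solution_def by simp
    have "osc (y \<tau> - q) \<le> osc (y (\<tau> + 1) - y 1)"
    proof (rule LIMSEQ_le)
      show "(\<lambda>k. osc (y \<tau> - q) - 2 * e (Suc k)) \<longlonglongrightarrow> osc (y \<tau> - q)"
        using tendsto_diff[OF tendsto_const tendsto_mult_right_zero[OF LIMSEQ_Suc[OF lim]]]
        unfolding e_def by simp
      show "(\<lambda>k. osc (y (\<tau> + 1) - y 1) + 2 * e k) \<longlonglongrightarrow> osc (y (\<tau> + 1) - y 1)"
        using tendsto_add[OF tendsto_const tendsto_mult_right_zero[OF lim]]
        unfolding e_def by simp
      have "osc (y \<tau> - q) - 2 * e (Suc k) \<le> osc (y (\<tau> + 1) - y 1) + 2 * e k" for k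
      proof -
        have "osc (y \<tau> - q) - 2 * e (Suc k) \<le> W (tk (Suc k))"
          using W_close[of 0 "Suc k"] y0 by simp
        also have "\<dots> \<le> W (tk k + 1)"
          using W_antimono tk_nonneg[of k] tk_gap[of k] by simp
        also have "\<dots> \<le> osc (y (\<tau> + 1) - y 1) + 2 * e k"
          using W_close[of 1 k] by simp
        finally show ?thesis .
      qed
      then show "\<exists>N. \<forall>k\<ge>N. osc (y \<tau> - q) - 2 * e (Suc k) \<le> osc (y (\<tau> + 1) - y 1) + 2 * e k"
        by blast
    qed
    moreover have "osc (y (\<tau> + 1) - y 1) < osc (y \<tau> - q)"
      using osc_solution_less[OF fwd_solution_time_shift[OF y \<tau>] y, of 1] not_span y0 by simp
    ultimately show False by simp
  qed
  with y show ?thesis unfolding relative_equilibrium_def by blast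
qed

lemma osc_tendsto_relative_equilibrium:
  assumes x: "solution \<xi> x" and q: "relative_equilibrium q"
    and tk_nonneg: "\<And>k. 0 \<le> tk k" and lim: "(\<lambda>k. osc (x (tk k) - q)) \<longlonglongrightarrow> 0"
  shows "((\<lambda>t. osc (x t - q)) \<longlongrightarrow> 0) at_top"
proof -
  obtain y where y: "solution q y" "\<forall>t\<ge>0. y t - q \<in> span {v}"
    using q unfolding relative_equilibrium_def by blast
  have osc_eq: "osc (x t - q) = osc (x t - y t)" if "0 \<le> t" for t
    using osc_add_span[of "y t - q" "x t - y t"] y(2) that by simp
  have bound: "osc (x t - q) \<le> osc (x (tk k) - q)" if "tk k \<le> t" for k t
    using osc_solution_antimono[OF x y(1) tk_nonneg that] osc_eq[of t] osc_eq[of "tk k"]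
      tk_nonneg[of k] that by simp
  show ?thesis
  proof (rule tendstoI)
    fix \<epsilon> :: real assume "0 < \<epsilon>"
    then have "\<forall>\<^sub>F k in sequentially. osc (x (tk k) - q) < \<epsilon>"
      by (rule order_tendstoD(2)[OF lim])
    then obtain k where k: "osc (x (tk k) - q) < \<epsilon>"
      by (auto simp: eventually_sequentially)
    show "\<forall>\<^sub>F t in at_top. dist (osc (x t - q)) 0 < \<epsilon>"
      unfolding eventually_at_top_linorder
      using bound[of k] k osc_nonneg by (intro exI[of _ "tk k"]) (auto intro: le_less_trans)
  qed
qed

end

locale reaction_system = positive_vector v for v :: "real^'m" +
  fixes \<Gamma> :: "real^'m^'n" and R :: "real^'n \<Rightarrow> real^'m" and \<sigma> :: "real^'n"
  assumes kernel: "{x. \<Gamma> *v x = 0} = span {v}"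
    and R_continuous: "continuous_on nonneg_orthant R"
    and solution_exists: "\<rho> \<in> nonneg_orthant \<Longrightarrow> \<exists>S. fwd_solution (\<lambda>S. \<Gamma> *v R S) nonneg_orthant \<rho> S"
    and solution_bounded: "fwd_solution (\<lambda>S. \<Gamma> *v R S) nonneg_orthant \<rho> S \<Longrightarrow> bounded (S ` {0..})"
    and extent_strongly_monotone: "\<lbrakk>
      fwd_solution (\<lambda>x. R (\<sigma> + \<Gamma> *v x)) {x. \<sigma> + \<Gamma> *v x \<in> nonneg_orthant} \<xi>1 x1;
      fwd_solution (\<lambda>x. R (\<sigma> + \<Gamma> *v x)) {x. \<sigma> + \<Gamma> *v x \<in> nonneg_orthant} \<xi>2 x2;
      \<forall>i. \<xi>2 $ i \<le> \<xi>1 $ i; \<xi>1 \<noteq> \<xi>2; 0 < t\<rbrakk> \<Longrightarrow> x2 t $ i < x1 t $ i"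
begin

lemma matrix_vector_mult_v_eq_0: "\<Gamma> *v v = 0"
  using kernel span_base[of v "{v}"] by auto

sublocale shift_invariant_monotone_system v "\<lambda>x. R (\<sigma> + \<Gamma> *v x)" "{x. \<sigma> + \<Gamma> *v x \<in> nonneg_orthant}"
proof
  show "R (\<sigma> + \<Gamma> *v (x + c *\<^sub>R v)) = R (\<sigma> + \<Gamma> *v x)"
    and "x + c *\<^sub>R v \<in> {x. \<sigma> + \<Gamma> *v x \<in> nonneg_orthant}"
    if "x \<in> {x. \<sigma> + \<Gamma> *v x \<in> nonneg_orthant}" for x c
    using that by (simp_all add: matrix_vector_right_distrib matrix_vector_mult_scaleR matrix_vector_mult_v_eq_0)
qed (fact extent_strongly_monotone)

lemma extent_solution_exists:
  assumes "\<sigma> + \<Gamma> *v q \<in> nonneg_orthant"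
  shows "\<exists>y. solution q y"
proof -
  obtain S where "fwd_solution (\<lambda>S. \<Gamma> *v R S) nonneg_orthant (\<sigma> + \<Gamma> *v q) S"
    using solution_exists[OF assms] by blast
  from fwd_solution_lift[OF R_continuous this] show ?thesis by blast
qed

lemma relative_equilibrium_mem:
  assumes "relative_equilibrium q"
  shows "\<sigma> + \<Gamma> *v q \<in> nonneg_orthant"
  using assms unfolding relative_equilibrium_def fwd_solution_def by force

lemma relative_equilibrium_unique_image:
  assumes "relative_equilibrium p" "relative_equilibrium q"
  shows "\<Gamma> *v p = \<Gamma> *v q"
proof -
  have "\<Gamma> *v (p - q) = 0" using relative_equilibrium_unique[OF assms] kernel by blast
  then show ?thesis by (simp add: matrix_vector_mult_diff_distrib)
qed

lemma osc_convergent_subsequence: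
  assumes x: "solution \<xi> x" and bounded: "bounded ((\<lambda>t. \<Gamma> *v x t) ` {0..})"
  obtains q tk where "\<sigma> + \<Gamma> *v q \<in> nonneg_orthant" "\<And>k. 0 \<le> tk k" "\<And>k. tk k + 1 \<le> tk (Suc k)"
    "(\<lambda>k. osc (x (tk k) - q)) \<longlonglongrightarrow> 0"
proof -
  have "bounded (range (\<lambda>k::nat. \<Gamma> *v x (real k)))"
    by (rule bounded_subset[OF bounded]) auto
  then obtain w r where r: "strict_mono r" and lim: "(\<lambda>k. \<Gamma> *v x (real (r k))) \<longlonglongrightarrow> w"
    using bounded_imp_convergent_subsequence[of "\<lambda>k. \<Gamma> *v x (real k)"] by (auto simp: o_def)
  have "closed (range (\<lambda>z. \<Gamma> *v z))"
    by (intro closed_subspace linear_subspace_image matrix_vector_mul_linear subspace_UNIV)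
  then have "w \<in> range (\<lambda>z. \<Gamma> *v z)"
    by (rule closed_sequentially[OF _ _ lim]) auto
  then obtain q where q: "w = \<Gamma> *v q" by blast
  have "\<sigma> + \<Gamma> *v x (real (r k)) \<in> nonneg_orthant" for k
    using x unfolding fwd_solution_def by auto
  then have q_mem: "\<sigma> + \<Gamma> *v q \<in> nonneg_orthant"
    using closed_sequentially[OF closed_nonneg_orthant _ tendsto_add[OF tendsto_const lim]] q by auto
  obtain K where K: "\<And>a. osc a \<le> K * norm (\<Gamma> *v a)"
    using osc_le_norm_matrix[OF kernel] by blast
  have "(\<lambda>k. osc (x (real (r k)) - q)) \<longlonglongrightarrow> 0"
  proof (rule Lim_null_comparison)
    have "norm (osc (x (real (r k)) - q)) \<le> K * norm (\<Gamma> *v x (real (r k)) - w)" for k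
      using K[of "x (real (r k)) - q"] osc_nonneg by (simp add: q matrix_vector_mult_diff_distrib)
    then show "\<forall>\<^sub>F k in sequentially. norm (osc (x (real (r k)) - q)) \<le> K * norm (\<Gamma> *v x (real (r k)) - w)"
      by simp
    show "(\<lambda>k. K * norm (\<Gamma> *v x (real (r k)) - w)) \<longlonglongrightarrow> 0"
      using lim by (intro tendsto_mult_right_zero tendsto_norm_zero) (simp add: LIM_zero)
  qed
  moreover have "real (r k) + 1 \<le> real (r (Suc k))" for k
    using strict_monoD[OF r, of k "Suc k"] by simp
  ultimately show ?thesis by (intro that[OF q_mem, of "\<lambda>k. real (r k)"]) auto
qed

lemma tendsto_relative_equilibrium:
  assumes S: "fwd_solution (\<lambda>S. \<Gamma> *v R S) nonneg_orthant (\<sigma> + \<Gamma> *v \<xi>) S"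
  shows "\<exists>q. relative_equilibrium q \<and> (S \<longlongrightarrow> \<sigma> + \<Gamma> *v q) at_top"
proof -
  obtain x where x: "solution \<xi> x" and S_x: "\<forall>t\<ge>0. S t = \<sigma> + \<Gamma> *v x t"
    using fwd_solution_lift[OF R_continuous S] by blast
  have "bounded ((\<lambda>z. - \<sigma> + z) ` S ` {0..})"
    by (rule bounded_translation[OF solution_bounded[OF S]])
  moreover have "(\<lambda>t. \<Gamma> *v x t) ` {0..} \<subseteq> (\<lambda>z. - \<sigma> + z) ` S ` {0..}"
  proof (rule image_subsetI)
    fix t :: real assume "t \<in> {0..}"
    then have "\<Gamma> *v x t = - \<sigma> + S t" and "S t \<in> S ` {0..}" using S_x by auto
    then show "\<Gamma> *v x t \<in> (\<lambda>z. - \<sigma> + z) ` S ` {0..}" by (rule image_eqI)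
  qed
  ultimately have "bounded ((\<lambda>t. \<Gamma> *v x t) ` {0..})"
    by (rule bounded_subset)
  then obtain q tk where q: "\<sigma> + \<Gamma> *v q \<in> nonneg_orthant" and tk: "\<And>k. 0 \<le> tk k"
    "\<And>k. tk k + 1 \<le> tk (Suc k)" and lim: "(\<lambda>k. osc (x (tk k) - q)) \<longlonglongrightarrow> 0"
    using osc_convergent_subsequence[OF x] by blast
  obtain y where "solution q y" using extent_solution_exists[OF q] by blast
  then have rel: "relative_equilibrium q"
    by (rule relative_equilibrium_of_limit[OF x _ tk lim])
  obtain K where K: "\<And>a. norm (\<Gamma> *v a) \<le> K * osc a"
    using norm_matrix_le_osc[OF matrix_vector_mult_v_eq_0] by blast
  have "((\<lambda>t. \<Gamma> *v x t - \<Gamma> *v q) \<longlongrightarrow> 0) at_top"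
  proof (rule Lim_null_comparison)
    have "norm (\<Gamma> *v x t - \<Gamma> *v q) \<le> K * osc (x t - q)" for t
      using K[of "x t - q"] by (simp add: matrix_vector_mult_diff_distrib)
    then show "\<forall>\<^sub>F t in at_top. norm (\<Gamma> *v x t - \<Gamma> *v q) \<le> K * osc (x t - q)"
      by simp
    show "((\<lambda>t. K * osc (x t - q)) \<longlongrightarrow> 0) at_top"
      using osc_tendsto_relative_equilibrium[OF x rel tk(1) lim] by (rule tendsto_mult_right_zero)
  qed
  then have "((\<lambda>t. \<sigma> + \<Gamma> *v x t) \<longlongrightarrow> \<sigma> + \<Gamma> *v q) at_top"
    by (intro tendsto_add tendsto_const) (simp add: LIM_zero_iff)
  moreover have "\<forall>\<^sub>F t in at_top. \<sigma> + \<Gamma> *v x t = S t"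
    unfolding eventually_at_top_linorder using S_x by (intro exI[of _ 0]) simp
  ultimately have "(S \<longlongrightarrow> \<sigma> + \<Gamma> *v q) at_top"
    by (rule Lim_transform_eventually)
  with rel show ?thesis by blast
qed

end

theorem corollary3:
  fixes \<Gamma> :: "real^'m^'n" and R :: "real^'n \<Rightarrow> real^'m" and \<sigma> :: "real^'n"
  assumes lip: "loc_lipschitz_on nonneg_orthant R"
    and inv_complete: "\<forall>\<rho>\<in>nonneg_orthant. \<exists>S. fwd_solution (\<lambda>S. \<Gamma> *v R S) nonneg_orthant \<rho> S"
    and rank: "rank \<Gamma> = CARD('m) - 1"
    and kernel: "\<exists>v::real^'m. norm v = 1 \<and> (\<forall>i. 0 < v $ i) \<and> {x. \<Gamma> *v x = 0} = span {v}"
    and bounded: "\<forall>\<rho> S. fwd_solution (\<lambda>S. \<Gamma> *v R S) nonneg_orthant \<rho> S \<longrightarrow> bounded (S ` {0..})"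
    and sigma: "\<sigma> \<in> nonneg_orthant"
    and strongly_monotone:
      "\<forall>\<xi>1 \<xi>2 x1 x2.
         fwd_solution (\<lambda>x. R (\<sigma> + \<Gamma> *v x)) {x. \<sigma> + \<Gamma> *v x \<in> nonneg_orthant} \<xi>1 x1 \<and>
         fwd_solution (\<lambda>x. R (\<sigma> + \<Gamma> *v x)) {x. \<sigma> + \<Gamma> *v x \<in> nonneg_orthant} \<xi>2 x2 \<and>
         (\<forall>i. \<xi>2 $ i \<le> \<xi>1 $ i) \<and> \<xi>1 \<noteq> \<xi>2
         \<longrightarrow> (\<forall>t>0. \<forall>i. x2 t $ i < x1 t $ i)"
  shows "\<exists>\<zeta>\<in>nonneg_orthant. \<forall>\<rho>\<in>nonneg_orthant. \<rho> - \<sigma> \<in> range (\<lambda>x. \<Gamma> *v x) \<longrightarrow>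
           (\<forall>S. fwd_solution (\<lambda>S. \<Gamma> *v R S) nonneg_orthant \<rho> S \<longrightarrow> (S \<longlongrightarrow> \<zeta>) at_top)"
proof -
  \<comment> \<open>\<open>rank\<close> follows from \<open>kernel\<close>, \<open>norm v = 1\<close> is irrelevant, and \<open>lip\<close> is only
    needed for continuity: uniqueness of solutions comes from strong monotonicity.\<close>
  obtain v :: "real^'m" where v: "\<forall>i. 0 < v $ i" "{x. \<Gamma> *v x = 0} = span {v}"
    using kernel by blast
  interpret reaction_system v \<Gamma> R \<sigma>
    using v loc_lipschitz_on_imp_continuous_on[OF lip] inv_complete bounded strongly_monotone
    by unfold_locales blast+
  obtain S0 where "fwd_solution (\<lambda>S. \<Gamma> *v R S) nonneg_orthant (\<sigma> + \<Gamma> *v 0) S0"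
    using inv_complete sigma by auto
  then obtain q0 where q0: "relative_equilibrium q0"
    using tendsto_relative_equilibrium by blast
  show ?thesis
  proof (intro bexI ballI impI allI)
    show "\<sigma> + \<Gamma> *v q0 \<in> nonneg_orthant"
      using q0 by (rule relative_equilibrium_mem)
    fix \<rho> S
    assume "\<rho> - \<sigma> \<in> range (\<lambda>x. \<Gamma> *v x)"
      and S: "fwd_solution (\<lambda>S. \<Gamma> *v R S) nonneg_orthant \<rho> S"
    then obtain \<xi> where "\<rho> = \<sigma> + \<Gamma> *v \<xi>"
      by (metis add.commute diff_add_cancel rangeE)
    with S obtain q where "relative_equilibrium q" "(S \<longlongrightarrow> \<sigma> + \<Gamma> *v q) at_top"
      using tendsto_relative_equilibrium by blast
    then show "(S \<longlongrightarrow> \<sigma> + \<Gamma> *v q0) at_top"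
      using relative_equilibrium_unique_image[OF q0] by simp
  qed
qed

end
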